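(* Let $f$ be the staircase function with descriptor $(h,o,\delta,\ell,L,V)$. For every integer $i\in[h]$, the fitness signal of step $i$ of $f$ is $S(\text{step } i)=\delta/2^{o(i-1)}$.
   Context: For a positive integer $n$, $[n]=\{1,\dots,n\}$ and $\mathfrak B_\ell$ is the set of binary strings of length $\ell$; $g_j$ denotes the $j$-th bit of $g$. For a $k$-tuple $x=(x_1,\dots,x_k)$ of integers in $[\ell]$ and $g\in\mathfrak B_\ell$, $\Xi_x(g)$ is the string $g_{x_1}g_{x_2}\cdots g_{x_k}$. For a matrix $M$, $M_{i:}$ is its $i$-th row (as a tuple). A staircase function descriptor is a tuple $(h,o,\delta,\ell,L,V)$ where $h,o,\ell$ are positive integers with $ho\le \ell$, $\delta>0$ is real, $V$ is an $h\times o$ matrix of bits, and $L$ is an $h\times o$ matrix whose $ho$ entries are pairwise distinct integers in $[\ell]$. The staircase function $f$ with this descriptor is the stochastic function on $\mathfrak B_\ell$ computed as follows on input $g$: draw $x\sim\mathcal N(0,1)$ (independently at each evaluation); for $i=1,\dots,h$ in order: if $\Xi_{L_{i:}}(g)=V_{i1}\cdots V_{io}$ then set $x\leftarrow x+\delta$, otherwise set $x\leftarrow x-\delta/(2^o-1)$ and stop the loop; return $x$. Step $i$ of $f$ is the schema $\{g\in\mathfrak B_\ell:\Xi_{L_{i:}}(g)=V_{i1}\cdots V_{io}\}$; stage $i$ of $f$ is the schema of all $g$ lying in steps $1,\dots,i$ simultaneously. For a schema $\gamma\subseteq\mathfrak B_\ell$, $F_\gamma$ is the random variable giving the value of $f$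 at a string drawn uniformly from $\gamma$. The fitness signal of $\gamma$ is $S(\gamma)=\mathbf E[F_\gamma]-\mathbf E[F_{\mathfrak B_\ell}]$. *)

theory Defs
  imports "HOL-Probability.Probability"
begin

text \<open>Binary strings of length l are lists of booleans of length l; bit j (1-based) of g
is g ! (j - 1).\<close>

definition bitstrings :: "nat \<Rightarrow> bool list set" where
  "bitstrings l = {g. length g = l}"

definition bit :: "bool list \<Rightarrow> nat \<Rightarrow> bool" where
  "bit g j = g ! (j - 1)"

definition Xi :: "nat list \<Rightarrow> bool list \<Rightarrow> bool list" where
  "Xi x g = map (bit g) x"

text \<open>Matrices are functions on 1-based indices; row i of a matrix with w columns.\<close>
definition row :: "(nat \<Rightarrow> nat \<Rightarrow> 'a) \<Rightarrow> nat \<Rightarrow> nat \<Rightarrow> 'a list" where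
  "row M w i = map (M i) [1..<w + 1]"

definition is_staircase_descriptor ::
  "nat \<Rightarrow> nat \<Rightarrow> real \<Rightarrow> nat \<Rightarrow> (nat \<Rightarrow> nat \<Rightarrow> nat) \<Rightarrow> (nat \<Rightarrow> nat \<Rightarrow> bool) \<Rightarrow> bool" where
  "is_staircase_descriptor h w \<delta> l L V \<longleftrightarrow>
     0 < h \<and> 0 < w \<and> 0 < l \<and> h * w \<le> l \<and> 0 < \<delta> \<and>
     inj_on (\<lambda>(i, j). L i j) ({1..h} \<times> {1..w}) \<and>
     (\<forall>i\<in>{1..h}. \<forall>j\<in>{1..w}. L i j \<in> {1..l})"

fun stair_loop ::
  "nat \<Rightarrow> real \<Rightarrow> (nat \<Rightarrow> nat \<Rightarrow> nat) \<Rightarrow> (nat \<Rightarrow> nat \<Rightarrow> bool) \<Rightarrow> bool list \<Rightarrow> nat list \<Rightarrow> real \<Rightarrow> real" where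
  "stair_loop w \<delta> L V g [] x = x"
| "stair_loop w \<delta> L V g (i # is) x =
     (if Xi (row L w i) g = row V w i
      then stair_loop w \<delta> L V g is (x + \<delta>)
      else x - \<delta> / (2 ^ w - 1))"

definition staircase ::
  "nat \<Rightarrow> nat \<Rightarrow> real \<Rightarrow> nat \<Rightarrow> (nat \<Rightarrow> nat \<Rightarrow> nat) \<Rightarrow> (nat \<Rightarrow> nat \<Rightarrow> bool) \<Rightarrow> bool list \<Rightarrow> real measure" where
  "staircase h w \<delta> l L V g =
     distr (density lborel std_normal_density) borel (\<lambda>x. stair_loop w \<delta> L V g [1..<h + 1] x)"

definition step_schema ::
  "nat \<Rightarrow> nat \<Rightarrow> real \<Rightarrow> nat \<Rightarrow> (nat \<Rightarrow> nat \<Rightarrow> nat) \<Rightarrow> (nat \<Rightarrow> nat \<Rightarrow> bool) \<Rightarrow> nat \<Rightarrow> bool list set" where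
  "step_schema h w \<delta> l L V i = {g \<in> bitstrings l. Xi (row L w i) g = row V w i}"

definition F_schema ::
  "nat \<Rightarrow> nat \<Rightarrow> real \<Rightarrow> nat \<Rightarrow> (nat \<Rightarrow> nat \<Rightarrow> nat) \<Rightarrow> (nat \<Rightarrow> nat \<Rightarrow> bool) \<Rightarrow> bool list set \<Rightarrow> real measure" where
  "F_schema h w \<delta> l L V \<gamma> =
     measure_pmf (pmf_of_set \<gamma>) \<bind> (\<lambda>g. staircase h w \<delta> l L V g)"

definition fitness_signal ::
  "nat \<Rightarrow> nat \<Rightarrow> real \<Rightarrow> nat \<Rightarrow> (nat \<Rightarrow> nat \<Rightarrow> nat) \<Rightarrow> (nat \<Rightarrow> nat \<Rightarrow> bool) \<Rightarrow> bool list set \<Rightarrow> real" where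
  "fitness_signal h w \<delta> l L V \<gamma> =
     (\<integral>x. x \<partial>F_schema h w \<delta> l L V \<gamma>) - (\<integral>x. x \<partial>F_schema h w \<delta> l L V (bitstrings l))"

end

theory Submission
  imports Defs
begin

(* Write q = 2^w and d = delta / (q - 1).  The loop of the staircase function only adds a
   constant c(g) to the normal sample, so the mean of f at g is c(g), and the mean of F_gamma
   is the average of c over gamma.  Unrolling the loop, c(g) is a sum over k = 1..h of
   delta * [g in stage k] - d * ([g in stage k-1] - [g in stage k]).

   All schemata needed are "fixed schemata": the strings lying in the steps j of a set
   J of step indices.  Since the positions of distinct steps are disjoint, such a schema has
   2^(l - w |J|) elements, and its intersection with stage k is the fixed schema of
   J + {1..k}.  Hence, summed over a fixed schema, the k-th summand vanishes when k is not in
   J (stage k has q times fewer elements than stage k-1) and equals delta times the size of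
   the stage when k is in J.  For J = {} (all strings) the total is 0, for J = {i} (step i)
   it is delta * 2^(l - w i); dividing by the size 2^(l - w) of step i gives the theorem. *)

definition in_step :: "nat \<Rightarrow> (nat \<Rightarrow> nat \<Rightarrow> nat) \<Rightarrow> (nat \<Rightarrow> nat \<Rightarrow> bool) \<Rightarrow> nat \<Rightarrow> bool list \<Rightarrow> bool" where
  "in_step w L V j g \<longleftrightarrow> Xi (row L w j) g = row V w j"

lemma in_step_iff: "in_step w L V j g \<longleftrightarrow> (\<forall>m\<in>{1..w}. g ! (L j m - 1) = V j m)"
  by (auto simp: in_step_def Xi_def row_def map_eq_conv bit_def)

definition stage :: "nat \<Rightarrow> (nat \<Rightarrow> nat \<Rightarrow> nat) \<Rightarrow> (nat \<Rightarrow> nat \<Rightarrow> bool) \<Rightarrow> nat \<Rightarrow> bool list set" where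
  "stage w L V k = {g. \<forall>j\<in>{1..k}. in_step w L V j g}"

lemma stage_Suc:
  assumes "1 \<le> k"
  shows "stage w L V k = stage w L V (k - 1) \<inter> {g. in_step w L V k g}"
proof -
  have "{1..k} = insert k {1..k - 1}" using assms by auto
  then show ?thesis by (auto simp: stage_def)
qed

definition fixed_schema ::
  "nat \<Rightarrow> nat \<Rightarrow> (nat \<Rightarrow> nat \<Rightarrow> nat) \<Rightarrow> (nat \<Rightarrow> nat \<Rightarrow> bool) \<Rightarrow> nat set \<Rightarrow> bool list set" where
  "fixed_schema l w L V J = {g \<in> bitstrings l. \<forall>j\<in>J. in_step w L V j g}"

lemma fixed_schema_stage:
  "fixed_schema l w L V J \<inter> stage w L V k = fixed_schema l w L V (J \<union> {1..k})"
  by (auto simp: fixed_schema_def stage_def)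

lemma finite_bitstrings: "finite (bitstrings l)"
  using finite_lists_length_eq[of "UNIV :: bool set" l] by (simp add: bitstrings_def)

lemma stair_loop_shift: "stair_loop w \<delta> L V g xs x = x + stair_loop w \<delta> L V g xs 0"
proof (induction xs arbitrary: x)
  case (Cons j xs)
  show ?case using Cons.IH[of "x + \<delta>"] Cons.IH[of \<delta>] by simp
qed simp

lemma stair_loop_upt:
  "stair_loop w \<delta> L V g [a..<b] 0 =
     (\<Sum>k\<in>{a..<b}. if \<forall>j\<in>{a..<k}. in_step w L V j g
                   then (if in_step w L V k g then \<delta> else - (\<delta> / (2 ^ w - 1))) else 0)"
proof (induction "b - a" arbitrary: a)
  case (Suc n)
  then have ab: "a < b" and n: "n = b - Suc a" by auto
  have range: "{a..<b} = insert a {Suc a..<b}" using ab by auto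
  have lower: "{a..<k} = insert a {Suc a..<k}" if "k \<in> {Suc a..<b}" for k using that by auto
  show ?case
  proof (cases "in_step w L V a g")
    case True
    let ?term = "\<lambda>c k. if \<forall>j\<in>{c..<k}. in_step w L V j g
                   then (if in_step w L V k g then \<delta> else - (\<delta> / (2 ^ w - 1))) else 0"
    have "stair_loop w \<delta> L V g [a..<b] 0 = \<delta> + stair_loop w \<delta> L V g [Suc a..<b] 0"
      using ab True stair_loop_shift[of w \<delta> L V g _ \<delta>] by (simp add: upt_conv_Cons in_step_def)
    also have "\<dots> = \<delta> + (\<Sum>k\<in>{Suc a..<b}. ?term (Suc a) k)"
      using Suc.hyps(1)[OF n] by simp
    also have "(\<Sum>k\<in>{Suc a..<b}. ?term (Suc a) k) = (\<Sum>k\<in>{Suc a..<b}. ?term a k)"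
      using True lower by (intro sum.cong) auto
    finally show ?thesis
      using True by (simp add: range)
  next
    case False
    then show ?thesis
      using ab by (simp add: upt_conv_Cons in_step_def range lower)
  qed
qed simp

lemma sum_stair_loop:
  assumes "finite S"
  shows "(\<Sum>g\<in>S. stair_loop w \<delta> L V g [1..<h+1] 0) =
    (\<Sum>k\<in>{1..h}. \<delta> * card (S \<inter> stage w L V k)
        - \<delta> / (2 ^ w - 1) * (real (card (S \<inter> stage w L V (k - 1))) - card (S \<inter> stage w L V k)))"
proof -
  let ?d = "\<delta> / (2 ^ w - 1)"
  let ?pass = "\<lambda>k g. g \<in> stage w L V k"
  have per_string: "stair_loop w \<delta> L V g [1..<h+1] 0 =
      (\<Sum>k\<in>{1..h}. \<delta> * of_bool (?pass k g) - ?d * (of_bool (?pass (k - 1) g) - of_bool (?pass k g)))"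
    for g
  proof -
    have "{1..<k} = {1..k - 1}" for k :: nat by auto
    then have "stair_loop w \<delta> L V g [1..<h+1] 0 = (\<Sum>k\<in>{1..h}.
        if ?pass (k - 1) g then (if in_step w L V k g then \<delta> else - ?d) else 0)"
      unfolding stair_loop_upt stage_def by (simp add: atLeastLessThanSuc_atLeastAtMost)
    also have "\<dots> = (\<Sum>k\<in>{1..h}. \<delta> * of_bool (?pass k g) - ?d * (of_bool (?pass (k - 1) g) - of_bool (?pass k g)))"
      by (intro sum.cong) (auto simp: stage_Suc)
    finally show ?thesis .
  qed
  have "(\<Sum>g\<in>S. stair_loop w \<delta> L V g [1..<h+1] 0) =
      (\<Sum>k\<in>{1..h}. \<Sum>g\<in>S. \<delta> * of_bool (?pass k g) - ?d * (of_bool (?pass (k - 1) g) - of_bool (?pass k g)))"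
    unfolding per_string by (rule sum.swap)
  also have "\<dots> = (\<Sum>k\<in>{1..h}. \<delta> * card (S \<inter> stage w L V k)
        - ?d * (real (card (S \<inter> stage w L V (k - 1))) - card (S \<inter> stage w L V k)))"
    using assms by (intro sum.cong) (simp_all add: sum_subtractf sum_distrib_left[symmetric] sum_divide_distrib[symmetric])
  finally show ?thesis .
qed

lemma card_lists_prescribed:
  assumes "T \<subseteq> {..<l}"
  shows "card {g :: bool list. length g = l \<and> (\<forall>t\<in>T. g ! t = v t)} = 2 ^ (l - card T)"
proof -
  let ?X = "{g :: bool list. length g = l \<and> (\<forall>t\<in>T. g ! t = v t)}"
  let ?P = "PiE {..<l} (\<lambda>t. if t \<in> T then {v t} else UNIV)"
  have "bij_betw (\<lambda>g. restrict (nth g) {..<l}) ?X ?P"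
  proof (rule bij_betw_byWitness[where f'="\<lambda>f. map f [0..<l]"])
    show "\<forall>g\<in>?X. map (restrict ((!) g) {..<l}) [0..<l] = g"
      by (auto intro!: nth_equalityI)
    show "\<forall>f\<in>?P. restrict ((!) (map f [0..<l])) {..<l} = f"
      by (auto simp: PiE_def extensional_def restrict_def fun_eq_iff)
    show "(\<lambda>g. restrict ((!) g) {..<l}) ` ?X \<subseteq> ?P"
      using assms by (auto simp: PiE_def)
    show "(\<lambda>f. map f [0..<l]) ` ?P \<subseteq> ?X"
      using assms by (auto simp: PiE_def Pi_def)
  qed
  then have "card ?X = card ?P" by (rule bij_betw_same_card)
  also have "\<dots> = (\<Prod>t<l. if t \<in> T then 1 else 2)"
    by (simp add: card_PiE if_distrib) (intro prod.cong, simp_all)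
  also have "\<dots> = 2 ^ card ({..<l} - T)"
    by (simp add: prod.If_cases Diff_eq)
  also have "card ({..<l} - T) = l - card T"
    using assms by (simp add: card_Diff_subset finite_subset)
  finally show ?thesis .
qed

(* A fixed schema is cut out by w * |J| distinct positions, so it has 2^(l - w |J|) elements. *)
lemma card_fixed_schema:
  assumes D: "is_staircase_descriptor h w \<delta> l L V" and J: "J \<subseteq> {1..h}"
  shows "card (fixed_schema l w L V J) = 2 ^ (l - w * card J)"
proof -
  define cells where "cells = {1..h} \<times> {1..w}"
  define pos where "pos = (\<lambda>(j, m). L j m - 1)"
  have inj_L: "inj_on (\<lambda>(j, m). L j m) cells"
    and L_range: "\<And>j m. j \<in> {1..h} \<Longrightarrow> m \<in> {1..w} \<Longrightarrow> L j m \<in> {1..l}"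
    using D unfolding is_staircase_descriptor_def cells_def by auto
  have inj_pos: "inj_on pos cells"
  proof (rule inj_onI)
    fix x y assume x: "x \<in> cells" and y: "y \<in> cells" and eq: "pos x = pos y"
    obtain a b c d where xy: "x = (a, b)" "y = (c, d)" by fastforce
    have "L a b \<ge> 1" "L c d \<ge> 1" using L_range x y by (auto simp: cells_def xy)
    then have "(\<lambda>(j, m). L j m) x = (\<lambda>(j, m). L j m) y"
      using eq by (simp add: pos_def xy)
    then show "x = y" using inj_onD[OF inj_L _ x y] by simp
  qed
  define T where "T = pos ` (J \<times> {1..w})"
  define v where "v t = case_prod V (inv_into cells pos t)" for t
  have sub: "J \<times> {1..w} \<subseteq> cells" using J by (auto simp: cells_def)
  have v_pos: "v (L j m - 1) = V j m" if "j \<in> J" "m \<in> {1..w}" for j m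
  proof -
    have "(j, m) \<in> cells" using sub that by auto
    then have "inv_into cells pos (pos (j, m)) = (j, m)" by (rule inv_into_f_f[OF inj_pos])
    then show ?thesis by (simp add: v_def pos_def)
  qed
  have "fixed_schema l w L V J = {g. length g = l \<and> (\<forall>t\<in>T. g ! t = v t)}"
    using v_pos by (auto simp: fixed_schema_def bitstrings_def in_step_iff T_def pos_def)
  moreover have "T \<subseteq> {..<l}"
    using L_range J by (fastforce simp: T_def pos_def)
  moreover have "card T = w * card J"
    using inj_on_subset[OF inj_pos sub] finite_subset[OF J]
    unfolding T_def by (simp add: card_image card_cartesian_product)
  ultimately show ?thesis by (simp add: card_lists_prescribed)
qed

lemma sum_stair_loop_fixed_schema:
  assumes D: "is_staircase_descriptor h w \<delta> l L V" and J: "J \<subseteq> {1..h}"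
  shows "(\<Sum>g\<in>fixed_schema l w L V J. stair_loop w \<delta> L V g [1..<h+1] 0) =
           (\<Sum>k\<in>J. \<delta> * 2 ^ (l - w * card (J \<union> {1..k})))"
proof -
  let ?S = "fixed_schema l w L V J"
  let ?c = "\<lambda>k. real (card (?S \<inter> stage w L V k))"
  have w: "0 < w" and wh: "h * w \<le> l"
    using D by (auto simp: is_staircase_descriptor_def)
  have c_eq: "?c k = 2 ^ (l - w * card (J \<union> {1..k}))" if "k \<le> h" for k
    using J that by (simp add: fixed_schema_stage card_fixed_schema[OF D])
  have contribution: "\<delta> * ?c k - \<delta> / (2 ^ w - 1) * (?c (k - 1) - ?c k) =
                (if k \<in> J then \<delta> * 2 ^ (l - w * card (J \<union> {1..k})) else 0)"
    if k: "k \<in> {1..h}" for k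
  proof -
    have c_k: "?c k = 2 ^ (l - w * card (J \<union> {1..k}))"
      and c_pred: "?c (k - 1) = 2 ^ (l - w * card (J \<union> {1..k - 1}))"
      using k c_eq[of k] c_eq[of "k - 1"] by auto
    have insert_k: "J \<union> {1..k} = insert k (J \<union> {1..k - 1})" using k by auto
    show ?thesis
    proof (cases "k \<in> J")
      case True
      then have "?c (k - 1) = ?c k" using c_k c_pred insert_k by (simp add: insert_absorb)
      then show ?thesis using True c_k by simp
    next
      case False
      define m where "m = card (J \<union> {1..k - 1})"
      have "k \<notin> J \<union> {1..k - 1}" using False k by auto
      then have card_k: "card (J \<union> {1..k}) = Suc m"
        using insert_k finite_subset[OF J] by (simp add: m_def)
      have "card (J \<union> {1..k}) \<le> h"
        using card_mono[of "{1..h}" "J \<union> {1..k}"] J k by auto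
      then have "w * Suc m \<le> l" using wh card_k by (metis mult.commute mult_le_mono1 order_trans)
      then have "l - w * m = w + (l - w * Suc m)" by simp
      then have "?c (k - 1) = 2 ^ w * ?c k"
        using c_k c_pred card_k by (simp add: m_def power_add)
      moreover have "(2 :: real) ^ w - 1 \<noteq> 0" using one_less_power[of "2 :: real" w] w by linarith
      ultimately show ?thesis using False by (simp add: field_simps)
    qed
  qed
  have "finite ?S" using finite_bitstrings by (simp add: fixed_schema_def)
  then have "(\<Sum>g\<in>?S. stair_loop w \<delta> L V g [1..<h+1] 0) =
      (\<Sum>k\<in>{1..h}. if k \<in> J then \<delta> * 2 ^ (l - w * card (J \<union> {1..k})) else 0)"
    unfolding sum_stair_loop[OF \<open>finite ?S\<close>] by (intro sum.cong refl contribution)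
  also have "\<dots> = (\<Sum>k\<in>{1..h} \<inter> J. \<delta> * 2 ^ (l - w * card (J \<union> {1..k})))"
    by (rule sum.inter_restrict[symmetric]) simp
  also have "{1..h} \<inter> J = J" using J by auto
  finally show ?thesis .
qed

lemma integral_uniform_mixture:
  fixes K :: "'a \<Rightarrow> real measure" and f :: "real \<Rightarrow> real"
  assumes A: "finite A" "A \<noteq> {}"
    and K: "\<And>g. K g \<in> space (subprob_algebra borel)"
    and f[measurable]: "f \<in> borel_measurable borel"
    and int: "\<And>g. g \<in> A \<Longrightarrow> integrable (K g) f"
  shows "integral\<^sup>L (measure_pmf (pmf_of_set A) \<bind> K) f = (\<Sum>g\<in>A. integral\<^sup>L (K g) f) / card A"
proof -
  let ?M = "measure_pmf (pmf_of_set A) \<bind> K"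
  have kernel: "K \<in> measurable (measure_pmf (pmf_of_set A)) (subprob_algebra borel)"
    using K by simp
  have sets_M: "sets ?M = sets borel"
    by (rule sets_bind) (use K in \<open>auto simp: space_subprob_algebra\<close>)
  have card_pos: "card A > 0" using A by (simp add: card_gt_0_iff)
  define pos where "pos g = enn2real (\<integral>\<^sup>+x. ennreal (f x) \<partial>K g)" for g
  define neg where "neg g = enn2real (\<integral>\<^sup>+x. ennreal (- f x) \<partial>K g)" for g
  have pos_neg_nonneg: "pos g \<ge> 0" "neg g \<ge> 0" for g by (auto simp: pos_def neg_def)
  have part: "(\<integral>\<^sup>+x. ennreal (\<phi> x) \<partial>?M) = ennreal ((\<Sum>g\<in>A. enn2real (\<integral>\<^sup>+x. ennreal (\<phi> x) \<partial>K g)) / card A)"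
    if \<phi>[measurable]: "\<phi> \<in> borel_measurable borel"
      and fin: "\<And>g. g \<in> A \<Longrightarrow> (\<integral>\<^sup>+x. ennreal (\<phi> x) \<partial>K g) \<noteq> \<infinity>" for \<phi>
  proof -
    have "(\<integral>\<^sup>+x. ennreal (\<phi> x) \<partial>?M) = (\<Sum>g\<in>A. \<integral>\<^sup>+x. ennreal (\<phi> x) \<partial>K g) / of_nat (card A)"
      using nn_integral_bind[OF _ kernel] nn_integral_pmf_of_set[OF A(2) A(1)] by simp
    also have "\<dots> = (\<Sum>g\<in>A. ennreal (enn2real (\<integral>\<^sup>+x. ennreal (\<phi> x) \<partial>K g))) / of_nat (card A)"
      using fin by (simp add: ennreal_enn2real_if)
    finally show ?thesis
      using card_pos by (simp add: ennreal_of_nat_eq_real_of_nat divide_ennreal sum_nonneg)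
  qed
  have fin_parts: "(\<integral>\<^sup>+x. ennreal (f x) \<partial>K g) \<noteq> \<infinity>" "(\<integral>\<^sup>+x. ennreal (- f x) \<partial>K g) \<noteq> \<infinity>"
    if "g \<in> A" for g
    using int[OF that] by (auto simp: real_integrable_def)
  have M_pos: "(\<integral>\<^sup>+x. ennreal (f x) \<partial>?M) = ennreal ((\<Sum>g\<in>A. pos g) / card A)"
    using part[of f] fin_parts(1) by (simp add: pos_def)
  have M_neg: "(\<integral>\<^sup>+x. ennreal (- f x) \<partial>?M) = ennreal ((\<Sum>g\<in>A. neg g) / card A)"
    using part[of "\<lambda>x. - f x"] fin_parts(2) by (simp add: neg_def)
  have "f \<in> borel_measurable ?M" by (subst measurable_cong_sets[OF sets_M refl]) (rule f)
  then have int_M: "integrable ?M f" using M_pos M_neg by (simp add: real_integrable_def)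
  have "integral\<^sup>L ?M f = (\<Sum>g\<in>A. pos g) / card A - (\<Sum>g\<in>A. neg g) / card A"
    using real_lebesgue_integral_def[OF int_M] M_pos M_neg pos_neg_nonneg by (simp add: sum_nonneg)
  also have "\<dots> = (\<Sum>g\<in>A. pos g - neg g) / card A"
    by (simp add: sum_subtractf diff_divide_distrib)
  also have "\<dots> = (\<Sum>g\<in>A. integral\<^sup>L (K g) f) / card A"
    using real_lebesgue_integral_def[OF int] fin_parts pos_neg_nonneg
    by (intro arg_cong[where f="\<lambda>x. x / _"] sum.cong) (auto simp: pos_def neg_def ennreal_enn2real_if)
  finally show ?thesis .
qed

lemma std_normal_mean:
  "integrable (density lborel std_normal_density) (\<lambda>x. x)"
  "integral\<^sup>L (density lborel std_normal_density) (\<lambda>x. x) = 0"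
proof -
  have "integrable lborel (\<lambda>x. std_normal_density x * x)"
    using integrable_std_normal_moment[of 1] by simp
  then show "integrable (density lborel std_normal_density) (\<lambda>x. x)"
    by (subst integrable_density) (auto simp: normal_density_nonneg)
  have "integral\<^sup>L (density lborel std_normal_density) (\<lambda>x. x) = integral\<^sup>L lborel (\<lambda>x. std_normal_density x * x)"
    by (subst integral_density) (auto simp: normal_density_nonneg)
  also have "\<dots> = 0" using integral_std_normal_moment_odd[of 0] by simp
  finally show "integral\<^sup>L (density lborel std_normal_density) (\<lambda>x. x) = 0" .
qed

lemma staircase_mean:
  shows "staircase h w \<delta> l L V g \<in> space (subprob_algebra borel)"
    and "integrable (staircase h w \<delta> l L V g) (\<lambda>x. x)"
    and "integral\<^sup>L (staircase h w \<delta> l L V g) (\<lambda>x. x) = stair_loop w \<delta> L V g [1..<h+1] 0"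
proof -
  define c where "c = stair_loop w \<delta> L V g [1..<h+1] 0"
  let ?N = "density lborel std_normal_density"
  interpret N: prob_space ?N by (rule prob_space_normal_density) simp
  have shifted: "staircase h w \<delta> l L V g = distr ?N borel (\<lambda>x. x + c)"
  proof -
    have "(\<lambda>x. stair_loop w \<delta> L V g [1..<h+1] x) = (\<lambda>x. x + c)"
      unfolding c_def by (rule ext, rule stair_loop_shift)
    then show ?thesis unfolding staircase_def by simp
  qed
  show "staircase h w \<delta> l L V g \<in> space (subprob_algebra borel)"
    unfolding shifted
    by (auto simp: space_subprob_algebra intro!: prob_space_imp_subprob_space N.prob_space_distr)
  have int_shift: "integrable ?N (\<lambda>x. x + c)"
    using std_normal_mean(1) by auto
  then show "integrable (staircase h w \<delta> l L V g) (\<lambda>x. x)"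
    unfolding shifted by (subst integrable_distr_eq) auto
  have "integral\<^sup>L (staircase h w \<delta> l L V g) (\<lambda>x. x) = integral\<^sup>L ?N (\<lambda>x. x + c)"
    unfolding shifted by (subst integral_distr) auto
  also have "\<dots> = c"
    using std_normal_mean N.prob_space by (simp add: Bochner_Integration.integral_add)
  finally show "integral\<^sup>L (staircase h w \<delta> l L V g) (\<lambda>x. x) = stair_loop w \<delta> L V g [1..<h+1] 0"
    by (simp add: c_def)
qed

lemma F_schema_mean:
  assumes "finite S" "S \<noteq> {}"
  shows "(\<integral>x. x \<partial>F_schema h w \<delta> l L V S) = (\<Sum>g\<in>S. stair_loop w \<delta> L V g [1..<h+1] 0) / card S"
  unfolding F_schema_def
  by (subst integral_uniform_mixture[OF assms]) (auto simp: staircase_mean)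

theorem theorem1:
  fixes h w l :: nat and \<delta> :: real
    and L :: "nat \<Rightarrow> nat \<Rightarrow> nat" and V :: "nat \<Rightarrow> nat \<Rightarrow> bool" and i :: nat
  assumes "is_staircase_descriptor h w \<delta> l L V"
    and "i \<in> {1..h}"
  shows "fitness_signal h w \<delta> l L V (step_schema h w \<delta> l L V i) = \<delta> / 2 ^ (w * (i - 1))"
proof -
  have i: "{i} \<subseteq> {1..h}" "{i} \<union> {1..i} = {1..i}" using assms(2) by auto
  have "w * h \<le> l" using assms(1) by (simp add: is_staircase_descriptor_def mult.commute)
  moreover have "w * i \<le> w * h" using assms(2) by simp
  ultimately have "w * i \<le> l" by (rule order_trans[rotated])
  then have split_exp: "l - w = w * (i - 1) + (l - w * i)"
    using assms(2) by (cases i) auto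
  have step_eq: "step_schema h w \<delta> l L V i = fixed_schema l w L V {i}"
    by (simp add: step_schema_def fixed_schema_def in_step_def)
  have all_eq: "bitstrings l = fixed_schema l w L V {}"
    by (simp add: fixed_schema_def)
  have card_step: "card (fixed_schema l w L V {i}) = 2 ^ (l - w)"
    using card_fixed_schema[OF assms(1) i(1)] by simp
  have nonempty: "fixed_schema l w L V J \<noteq> {}" if "J \<subseteq> {1..h}" for J
    using card_fixed_schema[OF assms(1) that] by fastforce
  have finite: "finite (fixed_schema l w L V J)" for J
    using finite_bitstrings by (simp add: fixed_schema_def)
  have "fitness_signal h w \<delta> l L V (step_schema h w \<delta> l L V i) = \<delta> * 2 ^ (l - w * i) / 2 ^ (l - w)"
    unfolding fitness_signal_def step_eq all_eq
    using F_schema_mean[OF finite nonempty[OF i(1)]] F_schema_mean[OF finite nonempty[of "{}"]] card_step i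
      sum_stair_loop_fixed_schema[OF assms(1) i(1)] sum_stair_loop_fixed_schema[OF assms(1), of "{}"]
    by simp
  also have "\<dots> = \<delta> / 2 ^ (w * (i - 1))"
    by (simp add: split_exp power_add)
  finally show ?thesis .
qed

end
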